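(* For integers $n\geq 3$ and $m\geq 1$, $\chi_\rho(FSSD_m(S'(K_n))) = n+2$.
   Context: All graphs are finite and simple. For a positive integer $i$, an $i$-packing in a graph is a set of vertices any two distinct members of which are at distance greater than $i$. The packing chromatic number $\chi_\rho(H)$ is the smallest $k$ such that $V(H)$ can be partitioned into sets $V_1,\dots,V_k$ with each $V_i$ an $i$-packing. For a positive integer $m$, $FSSD_m(G)$ is obtained from $G$ by replacing each edge $xy$ by a copy of $K_{2,m}$: the edge $xy$ is deleted and $m$ new vertices are added, each adjacent to exactly $x$ and $y$. The splitting graph $S'(G)$ of a graph $G$ with vertices $w_1,\dots,w_n$ is obtained from $G$ by adding new vertices $w_1',\dots,w_n'$, where each $w_i'$ is joined to every neighbor of $w_i$ in $G$ (equivalently, the neighborhood corona $G\star K_1$). $K_n$ is the complete graph on $n$ vertices. *)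

theory Defs
  imports Main
begin

text \<open>A finite simple graph is represented as a pair (V, E) of a vertex set and a set of
  edges, each edge being a two-element set of vertices.\<close>

type_synonym 'a graph = "'a set \<times> 'a set set"

definition verts :: "'a graph \<Rightarrow> 'a set" where "verts G = fst G"
definition edges :: "'a graph \<Rightarrow> 'a set set" where "edges G = snd G"

definition adj :: "'a graph \<Rightarrow> 'a \<Rightarrow> 'a \<Rightarrow> bool" where
  "adj G u v \<longleftrightarrow> u \<noteq> v \<and> {u, v} \<in> edges G"

definition walk :: "'a graph \<Rightarrow> 'a list \<Rightarrow> bool" where
  "walk G xs \<longleftrightarrow> xs \<noteq> [] \<and> set xs \<subseteq> verts G \<and>
     (\<forall>i. Suc i < length xs \<longrightarrow> adj G (xs ! i) (xs ! Suc i))"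

text \<open>dist_le G k u v: the distance between u and v in G is at most k
  (there is a u-v walk with at most k edges).\<close>
definition dist_le :: "'a graph \<Rightarrow> nat \<Rightarrow> 'a \<Rightarrow> 'a \<Rightarrow> bool" where
  "dist_le G k u v \<longleftrightarrow> (\<exists>xs. walk G xs \<and> hd xs = u \<and> last xs = v \<and> length xs \<le> Suc k)"

definition packing :: "'a graph \<Rightarrow> nat \<Rightarrow> 'a set \<Rightarrow> bool" where
  "packing G i S \<longleftrightarrow> S \<subseteq> verts G \<and>
     (\<forall>u\<in>S. \<forall>v\<in>S. u \<noteq> v \<longrightarrow> \<not> dist_le G i u v)"

definition packing_colorable :: "'a graph \<Rightarrow> nat \<Rightarrow> bool" where
  "packing_colorable G k \<longleftrightarrow> (\<exists>P :: nat \<Rightarrow> 'a set.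
      (\<Union>i\<in>{1..k}. P i) = verts G \<and>
      (\<forall>i\<in>{1..k}. \<forall>j\<in>{1..k}. i \<noteq> j \<longrightarrow> P i \<inter> P j = {}) \<and>
      (\<forall>i\<in>{1..k}. packing G i (P i)))"

definition packing_chromatic_number :: "'a graph \<Rightarrow> nat" where
  "packing_chromatic_number G = (LEAST k. packing_colorable G k)"

definition complete_graph :: "nat \<Rightarrow> nat graph" where
  "complete_graph n = ({0..<n}, {{i, j} | i j. i < n \<and> j < n \<and> i \<noteq> j})"

text \<open>Splitting graph S'(G): original vertices Inl w, new vertices Inr w (= w'),
  with w' joined to every neighbour of w.\<close>
definition splitting_graph :: "'a graph \<Rightarrow> ('a + 'a) graph" where
  "splitting_graph G =
     (Inl ` verts G \<union> Inr ` verts G,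
      (\<lambda>e. Inl ` e) ` edges G \<union>
      {{Inr w, Inl x} | w x. w \<in> verts G \<and> x \<in> verts G \<and> adj G w x})"

text \<open>FSSD_m(G): each edge e = xy replaced by K_{2,m}; the new vertices are Inr (e, j),
  j = 1..m, each adjacent exactly to x and y.\<close>
definition FSSD :: "nat \<Rightarrow> 'a graph \<Rightarrow> ('a + ('a set \<times> nat)) graph" where
  "FSSD m G =
     (Inl ` verts G \<union> {Inr (e, j) | e j. e \<in> edges G \<and> 1 \<le> j \<and> j \<le> m},
      {{Inl x, Inr (e, j)} | x e j. e \<in> edges G \<and> x \<in> e \<and> 1 \<le> j \<and> j \<le> m})"

end

(*
  Colour all subdivision vertices 1, all copies w_i' with 2 and the original vertices w_i with
  3, ..., n + 2: two copies have no common neighbour in S'(K_n), so they are at distance 4.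

  Conversely, take a packing colouring with at most n + 1 colours. No w_i has colour 1, since its
  2n - 2 neighbouring subdivision vertices are pairwise at distance 2 and would need distinct
  colours. So the w_i, pairwise at distance 2, use exactly the colours 2, ..., n + 1. A copy w_i'
  is at distance 2 from every w_j with j <> i and at distance 4 from w_i, so unless it has colour 1
  it shares colour 2 or 3 with w_i; as n >= 3, some w_i' has colour 1. The subdivision vertices
  between w_i' and the w_j are then within distance 3 of every original vertex, which forces
  colour 2 on all of them, although they are pairwise at distance 2.
*)
theory Submission
  imports Defs
begin

section \<open>Walks and distances\<close>

lemma adj_commute: "adj G a b \<longleftrightarrow> adj G b a"
  unfolding adj_def by (auto simp: insert_commute)

lemma walk_singleton: "walk G [a] \<longleftrightarrow> a \<in> verts G"
  by (simp add: walk_def)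

lemma walk_Cons_Cons: "walk G (a # b # xs) \<longleftrightarrow> a \<in> verts G \<and> adj G a b \<and> walk G (b # xs)"
  unfolding walk_def by (auto simp: less_Suc_eq_0_disj)

lemma walk_append:
  assumes "walk G xs" "walk G ys" "adj G (last xs) (hd ys)"
  shows "walk G (xs @ ys)"
proof -
  have "xs \<noteq> []" "ys \<noteq> []" using assms(1,2) by (simp_all add: walk_def)
  from \<open>xs \<noteq> []\<close> assms show ?thesis
  proof (induction xs rule: list_nonempty_induct)
    case (single x)
    then show ?case using \<open>ys \<noteq> []\<close> by (cases ys) (simp_all add: walk_Cons_Cons walk_singleton)
  next
    case (cons x xs)
    then show ?case by (cases xs) (simp_all add: walk_Cons_Cons)
  qed
qed

lemma dist_le_mono: "dist_le G k a b \<Longrightarrow> k \<le> l \<Longrightarrow> dist_le G l a b"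
  unfolding dist_le_def by force

lemma dist_le_adj: "adj G a b \<Longrightarrow> a \<in> verts G \<Longrightarrow> b \<in> verts G \<Longrightarrow> dist_le G 1 a b"
  unfolding dist_le_def by (intro exI[of _ "[a, b]"]) (simp add: walk_Cons_Cons walk_singleton)

lemma dist_le_trans:
  assumes "dist_le G k a b" "dist_le G l b c"
  shows "dist_le G (k + l) a c"
proof -
  obtain xs where xs: "walk G xs" "hd xs = a" "last xs = b" "length xs \<le> Suc k"
    using assms(1) unfolding dist_le_def by blast
  obtain ys where ys: "walk G ys" "hd ys = b" "last ys = c" "length ys \<le> Suc l"
    using assms(2) unfolding dist_le_def by blast
  then obtain zs where zs: "ys = b # zs" by (cases ys) (auto simp: walk_def)
  show ?thesis
  proof (cases zs)
    case Nil
    then show ?thesis using xs ys zs dist_le_mono unfolding dist_le_def by fastforce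
  next
    case (Cons z zs')
    have "walk G (xs @ zs)"
      using walk_append[OF xs(1), of zs] ys(1) xs(3) unfolding zs Cons by (simp add: walk_Cons_Cons)
    moreover have "xs \<noteq> []" using xs(1) by (simp add: walk_def)
    ultimately show ?thesis using xs ys zs Cons unfolding dist_le_def
      by (intro exI[of _ "xs @ zs"]) auto
  qed
qed

lemma dist_le_0_imp_eq: "dist_le G 0 a b \<Longrightarrow> a = b"
  unfolding dist_le_def by (auto simp: walk_def le_Suc_eq length_Suc_conv)

lemma dist_le_Suc_imp:
  assumes "dist_le G (Suc k) a b" "a \<noteq> b"
  shows "\<exists>w. adj G a w \<and> dist_le G k w b"
proof -
  obtain xs where xs: "walk G xs" "hd xs = a" "last xs = b" "length xs \<le> Suc (Suc k)"
    using assms(1) unfolding dist_le_def by blast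
  then obtain ys where ys: "xs = a # ys" by (cases xs) (auto simp: walk_def)
  with xs assms(2) obtain w zs where "ys = w # zs" by (cases ys) auto
  then have "adj G a w" "walk G ys" "hd ys = w" "last ys = b" "length ys \<le> Suc k"
    using xs unfolding ys by (auto simp: walk_Cons_Cons)
  then show ?thesis unfolding dist_le_def by blast
qed

lemma dist_le_1_imp_adj: "dist_le G 1 a b \<Longrightarrow> a \<noteq> b \<Longrightarrow> adj G a b"
  using dist_le_Suc_imp[of G 0] dist_le_0_imp_eq by fastforce

lemma dist_le_2_imp:
  "dist_le G 2 a b \<Longrightarrow> a \<noteq> b \<Longrightarrow> adj G a b \<or> (\<exists>w. adj G a w \<and> adj G w b)"
  using dist_le_Suc_imp[of G 1] dist_le_1_imp_adj by (metis numeral_2_eq_2 One_nat_def)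

section \<open>Packing colourings\<close>

definition packing_coloring :: "'a graph \<Rightarrow> nat \<Rightarrow> ('a \<Rightarrow> nat) \<Rightarrow> bool" where
  "packing_coloring G k c \<longleftrightarrow> (\<forall>x\<in>verts G. c x \<in> {1..k}) \<and>
     (\<forall>x\<in>verts G. \<forall>y\<in>verts G. x \<noteq> y \<longrightarrow> c x = c y \<longrightarrow> \<not> dist_le G (c x) x y)"

lemma packing_colorable_iff_packing_coloring:
  "packing_colorable G k \<longleftrightarrow> (\<exists>c. packing_coloring G k c)"
proof
  assume "packing_colorable G k"
  then obtain P where cover: "(\<Union>i\<in>{1..k}. P i) = verts G"
    and packings: "\<forall>i\<in>{1..k}. packing G i (P i)"
    unfolding packing_colorable_def by blast
  define c where "c x = (SOME i. i \<in> {1..k} \<and> x \<in> P i)" for x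
  have c: "c x \<in> {1..k} \<and> x \<in> P (c x)" if "x \<in> verts G" for x
    using that cover someI_ex[of "\<lambda>i. i \<in> {1..k} \<and> x \<in> P i"] unfolding c_def by blast
  have "packing_coloring G k c"
    unfolding packing_coloring_def
  proof (intro conjI ballI impI)
    fix x y assume x: "x \<in> verts G" and y: "y \<in> verts G" and "x \<noteq> y" "c x = c y"
    have "packing G (c x) (P (c x))" using packings c[OF x] by blast
    moreover have "y \<in> P (c x)" using c[OF y] \<open>c x = c y\<close> by simp
    ultimately show "\<not> dist_le G (c x) x y"
      using c[OF x] \<open>x \<noteq> y\<close> unfolding packing_def by blast
  qed (use c in blast)
  then show "\<exists>c. packing_coloring G k c" by blast
next
  assume "\<exists>c. packing_coloring G k c"
  then obtain c where c: "packing_coloring G k c" ..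
  have "packing G i {x \<in> verts G. c x = i}" for i
    unfolding packing_def
  proof (intro conjI ballI impI)
    fix u v assume "u \<in> {x \<in> verts G. c x = i}" "v \<in> {x \<in> verts G. c x = i}" "u \<noteq> v"
    then have "u \<in> verts G" "v \<in> verts G" "c u = c v" "c u = i" by simp_all
    with c \<open>u \<noteq> v\<close> show "\<not> dist_le G i u v" unfolding packing_coloring_def by blast
  qed blast
  moreover have "(\<Union>i\<in>{1..k}. {x \<in> verts G. c x = i}) = verts G"
    using c unfolding packing_coloring_def by blast
  ultimately show "packing_colorable G k"
    unfolding packing_colorable_def by (intro exI[of _ "\<lambda>i. {x \<in> verts G. c x = i}"]) blast
qed

lemma packing_coloring_same_color_dist:
  assumes "packing_coloring G k c" "x \<in> verts G" "y \<in> verts G" "x \<noteq> y" "c x = c y"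
    and "dist_le G d x y"
  shows "c x < d"
proof (rule ccontr)
  assume "\<not> c x < d"
  with assms(6) have "dist_le G (c x) x y" by (simp add: dist_le_mono)
  then show False using assms(1-5) unfolding packing_coloring_def by blast
qed

lemma packing_coloring_inj_on:
  assumes "packing_coloring G k c" "S \<subseteq> verts G"
    and "\<forall>x\<in>S. \<forall>y\<in>S. x \<noteq> y \<longrightarrow> dist_le G 2 x y" "\<forall>x\<in>S. c x \<noteq> 1"
  shows "inj_on c S" "c ` S \<subseteq> {2..k}"
proof -
  have colors: "c x \<in> {2..k}" if "x \<in> S" for x
    using assms that unfolding packing_coloring_def by fastforce
  then show "c ` S \<subseteq> {2..k}" by blast
  show "inj_on c S"
  proof (rule inj_onI, rule ccontr)
    fix x y assume "x \<in> S" "y \<in> S" "c x = c y" "x \<noteq> y"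
    then have "c x < 2"
      using assms packing_coloring_same_color_dist[OF assms(1), of x y 2] by blast
    then show False using colors[OF \<open>x \<in> S\<close>] by simp
  qed
qed

lemma packing_coloring_card_le:
  assumes "packing_coloring G k c" "S \<subseteq> verts G"
    and "\<forall>x\<in>S. \<forall>y\<in>S. x \<noteq> y \<longrightarrow> dist_le G 2 x y" "\<forall>x\<in>S. c x \<noteq> 1"
  shows "card S \<le> k - 1"
  using card_inj_on_le[OF packing_coloring_inj_on[OF assms]] by simp

lemma packing_coloring_range: "packing_coloring G k c \<Longrightarrow> x \<in> verts G \<Longrightarrow> c x \<in> {1..k}"
  unfolding packing_coloring_def by blast

section \<open>The graph \<open>FSSD\<^sub>m(H)\<close>\<close>

lemma verts_FSSD:
  "verts (FSSD m H) = Inl ` verts H \<union> Inr ` {(e, j). e \<in> edges H \<and> 1 \<le> j \<and> j \<le> m}"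
  by (auto simp: verts_def FSSD_def)

lemma verts_FSSD_Inl [simp]: "Inl x \<in> verts (FSSD m H) \<longleftrightarrow> x \<in> verts H"
  by (auto simp: verts_FSSD)

lemma verts_FSSD_Inr [simp]: "Inr (e, j) \<in> verts (FSSD m H) \<longleftrightarrow> e \<in> edges H \<and> 1 \<le> j \<and> j \<le> m"
  by (auto simp: verts_FSSD)

lemma adj_FSSD_Inl_Inr [simp]:
  "adj (FSSD m H) (Inl x) (Inr (e, j)) \<longleftrightarrow> e \<in> edges H \<and> x \<in> e \<and> 1 \<le> j \<and> j \<le> m"
  unfolding adj_def by (auto simp: edges_def FSSD_def doubleton_eq_iff)

lemma adj_FSSD_Inr_Inl [simp]:
  "adj (FSSD m H) (Inr (e, j)) (Inl x) \<longleftrightarrow> e \<in> edges H \<and> x \<in> e \<and> 1 \<le> j \<and> j \<le> m"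
  by (simp add: adj_commute[of _ "Inr (e, j)"])

lemma not_adj_FSSD_Inl_Inl [simp]: "\<not> adj (FSSD m H) (Inl x) (Inl y)"
  unfolding adj_def by (auto simp: edges_def FSSD_def doubleton_eq_iff)

lemma not_adj_FSSD_Inr_Inr [simp]: "\<not> adj (FSSD m H) (Inr p) (Inr q)"
  unfolding adj_def by (auto simp: edges_def FSSD_def doubleton_eq_iff)

lemma not_dist_le_1_FSSD_Inr: "p \<noteq> q \<Longrightarrow> \<not> dist_le (FSSD m H) 1 (Inr p) (Inr q)"
  using dist_le_1_imp_adj by fastforce

lemma dist_le_2_FSSD_InlD:
  assumes "dist_le (FSSD m H) 2 (Inl x) (Inl y)" "x \<noteq> y"
  shows "\<exists>e\<in>edges H. x \<in> e \<and> y \<in> e"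
proof -
  obtain w where "adj (FSSD m H) (Inl x) w" "adj (FSSD m H) w (Inl y)"
    using dist_le_2_imp[OF assms(1)] assms(2) by auto
  then show ?thesis by (cases w) auto
qed

lemma dist_le_2_FSSD_InlI:
  assumes "e \<in> edges H" "x \<in> e" "y \<in> e" "x \<in> verts H" "y \<in> verts H" "1 \<le> m"
  shows "dist_le (FSSD m H) 2 (Inl x) (Inl y)"
proof -
  have "dist_le (FSSD m H) (1 + 1) (Inl x) (Inl y)"
    by (rule dist_le_trans[OF dist_le_adj dist_le_adj, of _ _ "Inr (e, 1)"]) (use assms in simp_all)
  then show ?thesis by (simp only: one_add_one)
qed

lemma dist_le_2_FSSD_InrI:
  assumes "e \<in> edges H" "e' \<in> edges H" "x \<in> e" "x \<in> e'" "x \<in> verts H" "1 \<le> m"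
  shows "dist_le (FSSD m H) 2 (Inr (e, 1)) (Inr (e', 1))"
proof -
  have "dist_le (FSSD m H) (1 + 1) (Inr (e, 1)) (Inr (e', 1))"
    by (rule dist_le_trans[OF dist_le_adj dist_le_adj, of _ _ "Inl x"]) (use assms in simp_all)
  then show ?thesis by (simp only: one_add_one)
qed

section \<open>The graph \<open>FSSD\<^sub>m(S'(K\<^sub>n))\<close>\<close>

abbreviation splitting_complete :: "nat \<Rightarrow> (nat + nat) graph" where
  "splitting_complete n \<equiv> splitting_graph (complete_graph n)"

text \<open>\<open>original i\<close> is the vertex \<open>w\<^sub>i\<close> of \<open>K\<^sub>n\<close> and \<open>twin i\<close> its copy
  \<open>w\<^sub>i'\<close> in \<open>S'(K\<^sub>n)\<close>.\<close>
abbreviation original :: "'a \<Rightarrow> ('a + 'a) + 'b" where "original i \<equiv> Inl (Inl i)"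
abbreviation twin :: "'a \<Rightarrow> ('a + 'a) + 'b" where "twin i \<equiv> Inl (Inr i)"

lemma verts_splitting_complete: "verts (splitting_complete n) = {..<n} <+> {..<n}"
  by (auto simp: verts_def splitting_graph_def complete_graph_def)

lemma edges_splitting_complete:
  "e \<in> edges (splitting_complete n) \<longleftrightarrow>
     (\<exists>i<n. \<exists>j<n. i \<noteq> j \<and> (e = {Inl i, Inl j} \<or> e = {Inr i, Inl j}))"
proof
  assume "e \<in> edges (splitting_complete n)"
  then show "\<exists>i<n. \<exists>j<n. i \<noteq> j \<and> (e = {Inl i, Inl j} \<or> e = {Inr i, Inl j})"
    unfolding edges_def splitting_graph_def complete_graph_def adj_def verts_def by auto
next
  assume "\<exists>i<n. \<exists>j<n. i \<noteq> j \<and> (e = {Inl i, Inl j} \<or> e = {Inr i, Inl j})"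
  then obtain i j where ij: "i < n" "j < n" "i \<noteq> j" and "e = Inl ` {i, j} \<or> e = {Inr i, Inl j}"
    by auto
  moreover have "{i, j} \<in> edges (complete_graph n)" "adj (complete_graph n) i j"
    using ij by (auto simp: edges_def complete_graph_def adj_def)
  ultimately show "e \<in> edges (splitting_complete n)"
    using ij unfolding edges_def verts_def splitting_graph_def by (auto simp: complete_graph_def)
qed

lemma verts_splitting_complete_iff [simp]:
  "Inl i \<in> verts (splitting_complete n) \<longleftrightarrow> i < n"
  "Inr i \<in> verts (splitting_complete n) \<longleftrightarrow> i < n"
  by (auto simp: verts_splitting_complete)

lemma edges_splitting_complete_iff [simp]:
  "{Inl i, Inl j} \<in> edges (splitting_complete n) \<longleftrightarrow> i < n \<and> j < n \<and> i \<noteq> j"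
  "{Inr i, Inl j} \<in> edges (splitting_complete n) \<longleftrightarrow> i < n \<and> j < n \<and> i \<noteq> j"
  by (auto simp: edges_splitting_complete doubleton_eq_iff)

lemma packing_coloring_FSSD_splitting_complete:
  "packing_coloring (FSSD m (splitting_complete n)) (n + 2)
     (\<lambda>x. case x of Inl (Inl i) \<Rightarrow> i + 3 | Inl (Inr i) \<Rightarrow> 2 | Inr _ \<Rightarrow> 1)"
  (is "packing_coloring ?G _ _")
proof -
  have twins_far: "\<not> dist_le ?G 2 (twin a) (twin b)" if "a \<noteq> b" for a b
    using dist_le_2_FSSD_InlD[of m "splitting_complete n" "Inr a" "Inr b"] that
    by (auto simp: edges_splitting_complete)
  show ?thesis
    unfolding packing_coloring_def
    using twins_far not_dist_le_1_FSSD_Inr[of _ _ m "splitting_complete n"]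
    by (auto simp: verts_FSSD verts_splitting_complete split: sum.splits)
qed

context
  fixes n m :: nat
  assumes m: "1 \<le> m"
begin

lemma dist_le_2_original:
  "i < n \<Longrightarrow> j < n \<Longrightarrow> i \<noteq> j \<Longrightarrow>
     dist_le (FSSD m (splitting_complete n)) 2 (original i) (original j)"
  by (rule dist_le_2_FSSD_InlI[of "{Inl i, Inl j}"]) (use m in simp_all)

lemma dist_le_2_twin_original:
  "i < n \<Longrightarrow> j < n \<Longrightarrow> i \<noteq> j \<Longrightarrow>
     dist_le (FSSD m (splitting_complete n)) 2 (twin i) (original j)"
  by (rule dist_le_2_FSSD_InlI[of "{Inr i, Inl j}"]) (use m in simp_all)

lemma dist_le_4_twin_original:
  assumes "i < n" "j < n" "i \<noteq> j"
  shows "dist_le (FSSD m (splitting_complete n)) 4 (twin i) (original i)"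
  using dist_le_trans[OF dist_le_2_twin_original dist_le_2_original, of i j i] assms by simp

lemma dist_le_3_subdivision_original:
  assumes "i < n" "j < n" "i \<noteq> j" "p < n"
  shows "dist_le (FSSD m (splitting_complete n)) 3 (Inr ({Inr i, Inl j}, 1)) (original p)"
proof -
  have step: "dist_le (FSSD m (splitting_complete n)) 1 (Inr ({Inr i, Inl j}, 1)) (original j)"
    by (rule dist_le_adj) (use assms m in simp_all)
  then show ?thesis
  proof (cases "p = j")
    case False
    show ?thesis
      using dist_le_trans[OF step dist_le_2_original, of p] False assms
      by (simp add: numeral_3_eq_3)
  qed (auto elim: dist_le_mono)
qed

end

context
  fixes n m k :: nat and c :: "(nat + nat) + ((nat + nat) set \<times> nat) \<Rightarrow> nat"
  assumes n: "3 \<le> n" and m: "1 \<le> m"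
    and c: "packing_coloring (FSSD m (splitting_complete n)) k c"
begin

lemma color_original_eq_1_imp:
  assumes i: "i < n" and "c (original i) = 1"
  shows "2 * n - 1 \<le> k"
proof -
  define N where "N = verts (splitting_complete n) - {Inl i, Inr i}"
  define s :: "nat + nat \<Rightarrow> (nat + nat) + ((nat + nat) set \<times> nat)"
    where "s y = Inr ({y, Inl i}, 1)" for y
  have edge: "{y, Inl i} \<in> edges (splitting_complete n)" if "y \<in> N" for y
    using that i by (auto simp: N_def verts_splitting_complete)
  have s_verts: "s ` N \<subseteq> verts (FSSD m (splitting_complete n))"
    using edge m by (auto simp: s_def)
  have "card (s ` N) \<le> k - 1"
  proof (rule packing_coloring_card_le[OF c s_verts], safe)
    fix y y' assume "y \<in> N" "y' \<in> N"
    then show "dist_le (FSSD m (splitting_complete n)) 2 (s y) (s y')"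
      unfolding s_def by (intro dist_le_2_FSSD_InrI[where x = "Inl i"] edge) (use i m in simp_all)
  next
    fix y assume "y \<in> N" "c (s y) = 1"
    moreover have "dist_le (FSSD m (splitting_complete n)) 1 (original i) (s y)"
      unfolding s_def using edge[OF \<open>y \<in> N\<close>] by (intro dist_le_adj) (use i m in simp_all)
    ultimately show False
      using packing_coloring_same_color_dist[OF c, of "original i" "s y" 1] s_verts i assms(2)
      by (auto simp: s_def)
  qed
  moreover have "inj_on s N"
    by (rule inj_onI) (auto simp: s_def N_def doubleton_eq_iff)
  moreover have "card N = 2 * n - 2"
    using i unfolding N_def
    by (subst card_Diff_subset) (auto simp: verts_splitting_complete card_Plus)
  ultimately show ?thesis using n by (simp add: card_image)
qed

context
  assumes few: "k \<le> n + 1"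
begin

lemma color_original_ne_1: "i < n \<Longrightarrow> c (original i) \<noteq> 1"
  using color_original_eq_1_imp few n by fastforce

lemma bij_betw_color_original: "bij_betw (\<lambda>i. c (original i)) {..<n} {2..k}"
proof -
  let ?U = "original ` {..<n} :: ((nat + nat) + ((nat + nat) set \<times> nat)) set"
  have U: "?U \<subseteq> verts (FSSD m (splitting_complete n))" by auto
  have close: "\<forall>x\<in>?U. \<forall>y\<in>?U. x \<noteq> y \<longrightarrow> dist_le (FSSD m (splitting_complete n)) 2 x y"
    using dist_le_2_original[OF m] by auto
  have not_1: "\<forall>x\<in>?U. c x \<noteq> 1" using color_original_ne_1 by auto
  have inj: "inj_on (\<lambda>i. c (original i)) {..<n}"
    using packing_coloring_inj_on(1)[OF c U close not_1] by (auto simp: inj_on_def)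
  moreover have "(\<lambda>i. c (original i)) ` {..<n} = {2..k}"
  proof (rule card_seteq)
    show "(\<lambda>i. c (original i)) ` {..<n} \<subseteq> {2..k}"
      using packing_coloring_inj_on(2)[OF c U close not_1] by auto
    show "card {2..k} \<le> card ((\<lambda>i. c (original i)) ` {..<n})"
      using few by (simp add: card_image[OF inj])
  qed simp
  ultimately show ?thesis unfolding bij_betw_def ..
qed

lemma original_with_color:
  assumes "x \<in> verts (FSSD m (splitting_complete n))" "c x \<noteq> 1"
  obtains p where "p < n" "c (original p) = c x"
proof -
  have "c x \<in> {2..k}" using packing_coloring_range[OF c assms(1)] assms(2) by simp
  then have "c x \<in> (\<lambda>p. c (original p)) ` {..<n}"
    by (simp only: bij_betw_imp_surj_on[OF bij_betw_color_original])
  then show ?thesis using that by auto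
qed

lemma color_twin_ne_1_imp:
  assumes i: "i < n" and not_1: "c (twin i) \<noteq> 1"
  shows "c (twin i) = c (original i)" "c (twin i) \<le> 3"
proof -
  have v: "twin i \<in> verts (FSSD m (splitting_complete n))" using i by simp
  obtain p where p: "p < n" "c (original p) = c (twin i)"
    using original_with_color[OF v not_1] .
  have u: "original p \<in> verts (FSSD m (splitting_complete n))" using p by simp
  have "c (twin i) \<ge> 2" using packing_coloring_range[OF c v] not_1 by simp
  have "p = i"
  proof (rule ccontr)
    assume "p \<noteq> i"
    with i p have "dist_le (FSSD m (splitting_complete n)) 2 (twin i) (original p)"
      by (intro dist_le_2_twin_original[OF m]) auto
    then have "c (twin i) < 2" using packing_coloring_same_color_dist[OF c v u] p by simp
    then show False using \<open>c (twin i) \<ge> 2\<close> by simp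
  qed
  with p show same: "c (twin i) = c (original i)" by simp
  define j where "j = (if i = 0 then 1 else 0 :: nat)"
  have j: "j < n" "i \<noteq> j" using n by (auto simp: j_def)
  have "c (twin i) < 4"
    using packing_coloring_same_color_dist[OF c v _ _ same dist_le_4_twin_original[OF m i j]] i
    by simp
  then show "c (twin i) \<le> 3" by simp
qed

text \<open>Otherwise \<open>twin 0, twin 1, twin 2\<close> would share the colours of
  \<open>original 0, original 1, original 2\<close>, three distinct colours in \<open>{2, 3}\<close>.\<close>
lemma ex_twin_color_eq_1: "\<exists>i<n. c (twin i) = 1"
proof (rule ccontr)
  assume none: "\<not> (\<exists>i<n. c (twin i) = 1)"
  have "c (original i) \<in> {2..3}" if "i < 3" for i
  proof -
    have "i < n" using that n by simp
    moreover from none this have "c (twin i) \<noteq> 1" by blast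
    ultimately have "c (original i) \<le> 3" using color_twin_ne_1_imp by metis
    moreover have "c (original i) \<in> {2..k}"
      using bij_betw_apply[OF bij_betw_color_original] \<open>i < n\<close> by simp
    ultimately show ?thesis by simp
  qed
  moreover have "inj_on (\<lambda>i. c (original i)) {..<3}"
    by (rule inj_on_subset[OF bij_betw_imp_inj_on[OF bij_betw_color_original]]) (use n in auto)
  ultimately have "card {..<3::nat} \<le> card {2..3::nat}"
    by (intro card_inj_on_le) auto
  then show False by simp
qed

lemma color_subdivision_eq_2:
  assumes i: "i < n" "c (twin i) = 1" and j: "j < n" "j \<noteq> i"
  shows "c (Inr ({Inr i, Inl j}, 1)) = 2"
proof -
  let ?s = "Inr ({Inr i, Inl j}, 1) :: (nat + nat) + ((nat + nat) set \<times> nat)"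
  have s: "?s \<in> verts (FSSD m (splitting_complete n))" using i j m by simp
  have v: "twin i \<in> verts (FSSD m (splitting_complete n))" using i by simp
  have "dist_le (FSSD m (splitting_complete n)) 1 (twin i) ?s"
    by (rule dist_le_adj) (use i j m in simp_all)
  then have not_1: "c ?s \<noteq> 1"
    using packing_coloring_same_color_dist[OF c v s, of 1] i by auto
  then obtain p where p: "p < n" "c (original p) = c ?s"
    using original_with_color[OF s] by blast
  have u: "original p \<in> verts (FSSD m (splitting_complete n))" using p by simp
  have "dist_le (FSSD m (splitting_complete n)) 3 ?s (original p)"
    using dist_le_3_subdivision_original[OF m i(1) j(1) _ p(1)] j by simp
  then have "c ?s < 3" using packing_coloring_same_color_dist[OF c s u] p by simp
  then show ?thesis using packing_coloring_range[OF c s] not_1 by simp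
qed

end

lemma packing_coloring_FSSD_splitting_complete_colors_ge: "n + 2 \<le> k"
proof (rule ccontr)
  assume "\<not> n + 2 \<le> k"
  then have few: "k \<le> n + 1" by simp
  obtain i where i: "i < n" "c (twin i) = 1"
    using ex_twin_color_eq_1[OF few] by blast
  define j l where "j = (i + 1) mod 3" and "l = (i + 2) mod 3"
  have jl: "j < n" "l < n" "j \<noteq> i" "l \<noteq> i" "j \<noteq> l"
    using n unfolding j_def l_def by presburger+
  let ?s = "\<lambda>j. Inr ({Inr i, Inl j}, 1) :: (nat + nat) + ((nat + nat) set \<times> nat)"
  have colors: "c (?s j) = 2" "c (?s l) = 2"
    using color_subdivision_eq_2[OF few i] jl by simp_all
  have dist: "dist_le (FSSD m (splitting_complete n)) 2 (?s j) (?s l)"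
    by (rule dist_le_2_FSSD_InrI[where x = "Inr i"]) (use i jl m in simp_all)
  have verts: "?s j \<in> verts (FSSD m (splitting_complete n))"
    "?s l \<in> verts (FSSD m (splitting_complete n))"
    using i jl m by simp_all
  have "?s j \<noteq> ?s l" using jl by (simp add: doubleton_eq_iff)
  then have "c (?s j) < 2"
    using packing_coloring_same_color_dist[OF c verts _ _ dist] colors by simp
  then show False using \<open>c (?s j) = 2\<close> by simp
qed

end

theorem proposition9:
  fixes n m :: nat
  assumes "n \<ge> 3" and "m \<ge> 1"
  shows "packing_chromatic_number (FSSD m (splitting_graph (complete_graph n))) = n + 2"
  unfolding packing_chromatic_number_def packing_colorable_iff_packing_coloring
proof (rule Least_equality)
  show "\<exists>c. packing_coloring (FSSD m (splitting_complete n)) (n + 2) c"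
    using packing_coloring_FSSD_splitting_complete by blast
  fix k assume "\<exists>c. packing_coloring (FSSD m (splitting_complete n)) k c"
  then obtain c where "packing_coloring (FSSD m (splitting_complete n)) k c" ..
  then show "n + 2 \<le> k" by (rule packing_coloring_FSSD_splitting_complete_colors_ge[OF assms])
qed

end
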